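(* Let $\mathcal G=(V_{\min},V_{\max},E,w,\lambda)$ be a discounted payoff game. Consider the following procedure: choose an arbitrary joint strategy $\sigma$; then repeat: compute an optimal solution $\nu$ for $f_\sigma$ (a basis valuation of $H$ minimising $f_\sigma$ over all solutions of $H$); if $f_\sigma(\nu)=0$, return $\nu$; otherwise replace $\sigma$ by an arbitrary joint strategy that is better than $\sigma$. Then, for every choice of the initial joint strategy and of the better strategies, the procedure terminates, and the returned valuation is $\mathrm{val}(\mathcal G)$.
   Context: A discounted payoff game (DPG) is a tuple $\mathcal G=(V_{\min},V_{\max},E,w,\lambda)$ where $V=V_{\min}\cup V_{\max}$ is a finite set of vertices partitioned into disjoint sets $V_{\min}$ (player Min) and $V_{\max}$ (player Max), $E\subseteq V\times V$ is such that every vertex has at least one outgoing edge, $w:E\to\mathbb R$ and $\lambda:E\to[0,1)$ (write $w_e,\lambda_e$). The outcome of an infinite play $e_0e_1\ldots$ is $\sum_{i\ge0}w_{e_i}\prod_{j<i}\lambda_{e_j}$. A joint strategy is a map $\sigma:V\to V$ with $(v,\sigma(v))\in E$ for all $v$ (its restrictions to $V_{\min},V_{\max}$ being positional strategies of the two players). The value $\mathrm{val}(\mathcal G)(v)$ is $\sup_{\sigma_{\max}}\inf_{\sigma_{\min}}$ of the outcome of the play from $v$ (positional determinacy holds). $H$ is the system of inequations over $x\in\mathbb R^V$ containing, for each edge $e=(v,v')$, $x(v)\ge w_e+\lambda_e x(v')$ if $v\in V_{\max}$ and $x(v)\le w_e+\lambda_e x(v')$ if $v\in V_{\min}$. $\mathsf{offset}(x,(v,v'))=x(v)-(w_{(v,v')}+\lambda_{(v,v')}x(v'))$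 if $v\in V_{\max}$, and $(w_{(v,v')}+\lambda_{(v,v')}x(v'))-x(v)$ otherwise. For a joint strategy $\sigma$, $f_\sigma(x)=\sum_{v\in V}\mathsf{offset}(x,(v,\sigma(v)))$. A basis of $H$ is a set of $|V|$ inequations of $H$ whose equality versions have a unique common solution; if that solution satisfies $H$ it is the basis valuation. A joint strategy $\sigma'$ is better than $\sigma$ iff $\min\{f_{\sigma'}(x)\mid x \text{ solves } H\}<\min\{f_{\sigma}(x)\mid x\text{ solves } H\}$. *)

theory Defs
  imports Complex_Main
begin

definition is_dpg :: "'v::finite set \<Rightarrow> 'v set \<Rightarrow> ('v \<times> 'v) set \<Rightarrow> ('v \<times> 'v \<Rightarrow> real) \<Rightarrow> ('v \<times> 'v \<Rightarrow> real) \<Rightarrow> bool" where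
  "is_dpg Vmin Vmax E w lam \<longleftrightarrow>
     Vmin \<inter> Vmax = {} \<and> Vmin \<union> Vmax = UNIV \<and>
     (\<forall>v. \<exists>v'. (v, v') \<in> E) \<and>
     (\<forall>e\<in>E. 0 \<le> lam e \<and> lam e < 1)"

definition joint_strategy :: "('v \<times> 'v) set \<Rightarrow> ('v \<Rightarrow> 'v) \<Rightarrow> bool" where
  "joint_strategy E \<sigma> \<longleftrightarrow> (\<forall>v. (v, \<sigma> v) \<in> E)"

definition play :: "('v \<Rightarrow> 'v) \<Rightarrow> 'v \<Rightarrow> nat \<Rightarrow> 'v" where
  "play \<sigma> v n = (\<sigma> ^^ n) v"

definition outcome :: "('v \<times> 'v \<Rightarrow> real) \<Rightarrow> ('v \<times> 'v \<Rightarrow> real) \<Rightarrow> ('v \<Rightarrow> 'v) \<Rightarrow> 'v \<Rightarrow> real" where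
  "outcome w lam \<sigma> v =
     (\<Sum>i. w (play \<sigma> v i, play \<sigma> v (Suc i)) *
            (\<Prod>j<i. lam (play \<sigma> v j, play \<sigma> v (Suc j))))"

definition combine :: "'v set \<Rightarrow> ('v \<Rightarrow> 'v) \<Rightarrow> ('v \<Rightarrow> 'v) \<Rightarrow> 'v \<Rightarrow> 'v" where
  "combine Vmax \<sigma>max \<sigma>min = (\<lambda>u. if u \<in> Vmax then \<sigma>max u else \<sigma>min u)"

definition game_val :: "'v set \<Rightarrow> ('v \<times> 'v) set \<Rightarrow> ('v \<times> 'v \<Rightarrow> real) \<Rightarrow> ('v \<times> 'v \<Rightarrow> real) \<Rightarrow> 'v \<Rightarrow> real" where
  "game_val Vmax E w lam v =
     (SUP \<sigma>1\<in>{\<sigma>. joint_strategy E \<sigma>}. INF \<sigma>2\<in>{\<sigma>. joint_strategy E \<sigma>}.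
        outcome w lam (combine Vmax \<sigma>1 \<sigma>2) v)"

definition solves_H :: "'v set \<Rightarrow> ('v \<times> 'v) set \<Rightarrow> ('v \<times> 'v \<Rightarrow> real) \<Rightarrow> ('v \<times> 'v \<Rightarrow> real) \<Rightarrow> ('v \<Rightarrow> real) \<Rightarrow> bool" where
  "solves_H Vmax E w lam x \<longleftrightarrow>
     (\<forall>(v, v')\<in>E. if v \<in> Vmax then x v \<ge> w (v, v') + lam (v, v') * x v'
                              else x v \<le> w (v, v') + lam (v, v') * x v')"

definition offset :: "'v set \<Rightarrow> ('v \<times> 'v \<Rightarrow> real) \<Rightarrow> ('v \<times> 'v \<Rightarrow> real) \<Rightarrow> ('v \<Rightarrow> real) \<Rightarrow> 'v \<times> 'v \<Rightarrow> real" where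
  "offset Vmax w lam x e =
     (if fst e \<in> Vmax then x (fst e) - (w e + lam e * x (snd e))
      else (w e + lam e * x (snd e)) - x (fst e))"

definition f_strat :: "'v::finite set \<Rightarrow> ('v \<times> 'v \<Rightarrow> real) \<Rightarrow> ('v \<times> 'v \<Rightarrow> real) \<Rightarrow> ('v \<Rightarrow> 'v) \<Rightarrow> ('v \<Rightarrow> real) \<Rightarrow> real" where
  "f_strat Vmax w lam \<sigma> x = (\<Sum>v\<in>UNIV. offset Vmax w lam x (v, \<sigma> v))"

definition is_basis :: "('v::finite \<times> 'v) set \<Rightarrow> ('v \<times> 'v \<Rightarrow> real) \<Rightarrow> ('v \<times> 'v \<Rightarrow> real) \<Rightarrow> ('v \<times> 'v) set \<Rightarrow> bool" where
  "is_basis E w lam B \<longleftrightarrow> B \<subseteq> E \<and> card B = card (UNIV :: 'v set) \<and>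
     (\<exists>!x. \<forall>(v, v')\<in>B. x v = w (v, v') + lam (v, v') * x v')"

definition basis_valuation :: "'v::finite set \<Rightarrow> ('v \<times> 'v) set \<Rightarrow> ('v \<times> 'v \<Rightarrow> real) \<Rightarrow> ('v \<times> 'v \<Rightarrow> real) \<Rightarrow> ('v \<Rightarrow> real) \<Rightarrow> bool" where
  "basis_valuation Vmax E w lam x \<longleftrightarrow>
     (\<exists>B. is_basis E w lam B \<and> (\<forall>(v, v')\<in>B. x v = w (v, v') + lam (v, v') * x v')) \<and>
     solves_H Vmax E w lam x"

definition optimal_for :: "'v::finite set \<Rightarrow> ('v \<times> 'v) set \<Rightarrow> ('v \<times> 'v \<Rightarrow> real) \<Rightarrow> ('v \<times> 'v \<Rightarrow> real) \<Rightarrow> ('v \<Rightarrow> 'v) \<Rightarrow> ('v \<Rightarrow> real) \<Rightarrow> bool" where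
  "optimal_for Vmax E w lam \<sigma> \<nu> \<longleftrightarrow> basis_valuation Vmax E w lam \<nu> \<and>
     (\<forall>x. solves_H Vmax E w lam x \<longrightarrow> f_strat Vmax w lam \<sigma> \<nu> \<le> f_strat Vmax w lam \<sigma> x)"

definition fmin :: "'v::finite set \<Rightarrow> ('v \<times> 'v) set \<Rightarrow> ('v \<times> 'v \<Rightarrow> real) \<Rightarrow> ('v \<times> 'v \<Rightarrow> real) \<Rightarrow> ('v \<Rightarrow> 'v) \<Rightarrow> real" where
  "fmin Vmax E w lam \<sigma> = Inf (f_strat Vmax w lam \<sigma> ` {x. solves_H Vmax E w lam x})"

definition better :: "'v::finite set \<Rightarrow> ('v \<times> 'v) set \<Rightarrow> ('v \<times> 'v \<Rightarrow> real) \<Rightarrow> ('v \<times> 'v \<Rightarrow> real) \<Rightarrow> ('v \<Rightarrow> 'v) \<Rightarrow> ('v \<Rightarrow> 'v) \<Rightarrow> bool" where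
  "better Vmax E w lam \<sigma>' \<sigma> \<longleftrightarrow> fmin Vmax E w lam \<sigma>' < fmin Vmax E w lam \<sigma>"

end

theory Submission
  imports Defs "HOL-Analysis.Analysis"
begin

text \<open>The Bellman operator of the game is a contraction for the sup-distance; its fixed point y,
  together with a joint strategy tau choosing at every vertex an edge that attains the Max/Min,
  is a solution of H that is tight along tau. Then tau is a saddle point: deviating from it helps
  neither player, so y is the value, and f_tau has minimum 0 over the solutions of H.

  For a fixed joint strategy sigma, f_sigma is linear, nonnegative on the polyhedron of solutions
  of H, and that polyhedron contains no line since all discounts are below 1. Hence, as in the
  simplex method, moving along a direction orthogonal to the tight constraints reaches a vertex,
  i.e. one of the finitely many basis valuations, without increasing f_sigma, so optimal solutions
  exist. A strategy whose minimum is positive is improved by tau; minima decrease strictly along a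
  run and there are finitely many joint strategies, so every run terminates; and a returned
  valuation with f_sigma = 0 is tight along sigma, hence equals the value.\<close>

lemma no_infinite_descent_finite:
  fixes s :: "nat \<Rightarrow> 'a::finite" and F :: "'a \<Rightarrow> 'b::order"
  shows "\<not> (\<forall>i. F (s (Suc i)) < F (s i))"
proof -
  let ?r = "{(a, b). F a < F b}"
  have "trans ?r" by (auto intro: transI)
  then have "acyclic ?r" by (simp add: acyclic_def trancl_id)
  then have "wf ?r" by (intro finite_acyclic_wf) simp
  then show ?thesis by (simp add: wf_iff_no_infinite_down_chain)
qed

lemma Max_image_diff_le:
  fixes f g :: "'a \<Rightarrow> real"
  assumes "finite A" "A \<noteq> {}" "\<And>a. a \<in> A \<Longrightarrow> \<bar>f a - g a\<bar> \<le> M"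
  shows "\<bar>Max (f ` A) - Max (g ` A)\<bar> \<le> M"
proof -
  have "Max (f ` A) \<le> Max (g ` A) + M" if "\<And>a. a \<in> A \<Longrightarrow> f a \<le> g a + M" for f g :: "'a \<Rightarrow> real"
  proof -
    have "Max (f ` A) \<in> f ` A" using assms(1,2) by simp
    then obtain a where "a \<in> A" "Max (f ` A) = f a" by auto
    moreover have "g a \<le> Max (g ` A)" using assms(1) \<open>a \<in> A\<close> by simp
    ultimately show ?thesis using that[of a] by linarith
  qed
  from this[of f g] this[of g f] show ?thesis
    using assms(3) by (force simp: abs_le_iff)
qed

lemma Min_image_diff_le:
  fixes f g :: "'a \<Rightarrow> real"
  assumes "finite A" "A \<noteq> {}" "\<And>a. a \<in> A \<Longrightarrow> \<bar>f a - g a\<bar> \<le> M"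
  shows "\<bar>Min (f ` A) - Min (g ` A)\<bar> \<le> M"
proof -
  have "Min (f ` A) \<le> Min (g ` A) + M" if "\<And>a. a \<in> A \<Longrightarrow> f a \<le> g a + M" for f g :: "'a \<Rightarrow> real"
  proof -
    have "Min (g ` A) \<in> g ` A" using assms(1,2) by simp
    then obtain a where "a \<in> A" "Min (g ` A) = g a" by auto
    moreover have "Min (f ` A) \<le> f a" using assms(1) \<open>a \<in> A\<close> by simp
    ultimately show ?thesis using that[of a] by linarith
  qed
  from this[of f g] this[of g f] show ?thesis
    using assms(3) by (force simp: abs_le_iff)
qed

lemma SUP_INF_eq_saddle_value:
  fixes g :: "'a \<Rightarrow> 'b \<Rightarrow> real"
  assumes "finite S" "finite T" "s0 \<in> S" "t0 \<in> T"
    and "\<And>s. s \<in> S \<Longrightarrow> g s t0 \<le> c" and "\<And>t. t \<in> T \<Longrightarrow> c \<le> g s0 t"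
  shows "(SUP s\<in>S. INF t\<in>T. g s t) = c"
proof (rule antisym)
  have "(INF t\<in>T. g s t) \<le> c" if "s \<in> S" for s
    using assms(2,4,5) that by (meson bdd_below_finite cINF_lower2 finite_imageI)
  then show "(SUP s\<in>S. INF t\<in>T. g s t) \<le> c"
    using assms(3) by (intro cSUP_least) auto
  have "c \<le> (INF t\<in>T. g s0 t)"
    using assms(4,6) by (intro cINF_greatest) auto
  also have "\<dots> \<le> (SUP s\<in>S. INF t\<in>T. g s t)"
    using assms(1,3) by (intro cSUP_upper) auto
  finally show "c \<le> (SUP s\<in>S. INF t\<in>T. g s t)" .
qed

lemma sup_contraction_fixpoint:
  fixes F :: "('a::finite \<Rightarrow> real) \<Rightarrow> 'a \<Rightarrow> real"
  assumes "c < 1"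
    and contraction: "\<And>x y M v. (\<And>u. \<bar>x u - y u\<bar> \<le> M) \<Longrightarrow> \<bar>F x v - F y v\<bar> \<le> c * M"
  obtains x where "F x = x"
proof -
  let ?d = "Met_TC.fdist (UNIV :: 'a set) :: ('a \<Rightarrow> real) \<Rightarrow> _"
  have space: "Met_TC.fspace (UNIV :: 'a set) = (UNIV :: ('a \<Rightarrow> real) set)"
    by (auto simp: Met_TC.fspace_def)
  interpret Sup: Metric_space UNIV ?d
    using Met_TC.Metric_space_funspace by (metis space)
  have "Metric_space.mcomplete (UNIV :: real set) dist"
    by (simp add: complete_UNIV)
  then have "mcomplete_of (funspace (UNIV :: 'a set) (Met_TC.Self :: real metric))"
    by (rule Met_TC.mcomplete_funspace)
  then have "Sup.mcomplete"
    by (simp add: funspace_def space)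
  moreover have "?d (F x) (F y) \<le> c * ?d x y" for x y
  proof -
    have "\<bar>x u - y u\<bar> \<le> ?d x y" for u
      using Met_TC.funspace_mdist_le[of x UNIV y "?d x y"] by (simp add: space dist_real_def)
    then show ?thesis
      using Met_TC.funspace_mdist_le[of "F x" UNIV "F y"] contraction by (simp add: space dist_real_def)
  qed
  ultimately show thesis
    using Sup.Banach_fixedpoint_thm[of F c] \<open>c < 1\<close> that by auto
qed

lemma play_0 [simp]: "play \<pi> v 0 = v"
  by (simp add: play_def)

lemma play_Suc_right: "play \<pi> v (Suc i) = play \<pi> (\<pi> v) i"
  by (simp add: play_def funpow_swap1)

lemma play_edge: "joint_strategy E \<pi> \<Longrightarrow> (play \<pi> v i, play \<pi> v (Suc i)) \<in> E"
  by (simp add: play_def joint_strategy_def)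

lemma joint_strategy_combine:
  "joint_strategy E \<sigma>1 \<Longrightarrow> joint_strategy E \<sigma>2 \<Longrightarrow> joint_strategy E (combine Vmax \<sigma>1 \<sigma>2)"
  by (simp add: joint_strategy_def combine_def)

locale dpg =
  fixes Vmin Vmax :: "'v::finite set" and E :: "('v \<times> 'v) set"
    and w lam :: "'v \<times> 'v \<Rightarrow> real"
  assumes dpg: "is_dpg Vmin Vmax E w lam"
begin

lemma lam_nonneg: "e \<in> E \<Longrightarrow> 0 \<le> lam e"
  using dpg by (auto simp: is_dpg_def)

lemma lam_less_1: "e \<in> E \<Longrightarrow> lam e < 1"
  using dpg by (auto simp: is_dpg_def)

lemma ex_joint_strategy: "\<exists>\<sigma>. joint_strategy E \<sigma>"
  using dpg unfolding is_dpg_def joint_strategy_def by metis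

definition lam_max :: real where
  "lam_max = Max (insert 0 (lam ` E))"

lemma lam_max_nonneg: "0 \<le> lam_max"
  by (simp add: lam_max_def)

lemma lam_max_less_1: "lam_max < 1"
  using lam_less_1 by (simp add: lam_max_def Max_less_iff)

lemma lam_le_lam_max: "e \<in> E \<Longrightarrow> lam e \<le> lam_max"
  by (simp add: lam_max_def)

section \<open>Outcomes under a joint strategy\<close>

lemma summable_outcome:
  assumes "joint_strategy E \<pi>"
  shows "summable (\<lambda>i. w (play \<pi> v i, play \<pi> v (Suc i)) *
                        (\<Prod>j<i. lam (play \<pi> v j, play \<pi> v (Suc j))))"
proof (rule summable_comparison_test)
  define W where "W = Max (insert 0 ((\<lambda>e. \<bar>w e\<bar>) ` E))"
  have edge: "(play \<pi> v i, play \<pi> v (Suc i)) \<in> E" for i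
    using assms by (rule play_edge)
  have "\<bar>w (play \<pi> v i, play \<pi> v (Suc i))\<bar> * (\<Prod>j<i. lam (play \<pi> v j, play \<pi> v (Suc j)))
        \<le> W * lam_max ^ i" for i
  proof (rule mult_mono)
    show "\<bar>w (play \<pi> v i, play \<pi> v (Suc i))\<bar> \<le> W"
      using edge by (simp add: W_def)
    have "(\<Prod>j<i. lam (play \<pi> v j, play \<pi> v (Suc j))) \<le> (\<Prod>j<i. lam_max)"
      using edge lam_nonneg lam_le_lam_max by (intro prod_mono) auto
    then show "(\<Prod>j<i. lam (play \<pi> v j, play \<pi> v (Suc j))) \<le> lam_max ^ i"
      by simp
    show "0 \<le> W" by (simp add: W_def)
    show "0 \<le> (\<Prod>j<i. lam (play \<pi> v j, play \<pi> v (Suc j)))"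
      using edge lam_nonneg by (intro prod_nonneg) auto
  qed
  then show "\<exists>N. \<forall>i\<ge>N. norm (w (play \<pi> v i, play \<pi> v (Suc i)) *
                        (\<Prod>j<i. lam (play \<pi> v j, play \<pi> v (Suc j)))) \<le> W * lam_max ^ i"
    using edge lam_nonneg by (auto simp: abs_mult abs_prod)
  show "summable (\<lambda>i. W * lam_max ^ i)"
    using lam_max_nonneg lam_max_less_1 by (intro summable_mult summable_geometric) simp
qed

lemma outcome_unfold:
  assumes "joint_strategy E \<pi>"
  shows "outcome w lam \<pi> v = w (v, \<pi> v) + lam (v, \<pi> v) * outcome w lam \<pi> (\<pi> v)"
proof -
  define a where "a v i = w (play \<pi> v i, play \<pi> v (Suc i)) *
                           (\<Prod>j<i. lam (play \<pi> v j, play \<pi> v (Suc j)))" for v i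
  have a_Suc: "a v (Suc i) = lam (v, \<pi> v) * a (\<pi> v) i" for i
    unfolding a_def prod.lessThan_Suc_shift by (simp add: play_Suc_right)
  have "outcome w lam \<pi> v = a v 0 + (\<Sum>i. a v (Suc i))"
    using suminf_split_head[OF summable_outcome[OF assms]] by (simp add: outcome_def a_def)
  also have "(\<Sum>i. a v (Suc i)) = (\<Sum>i. lam (v, \<pi> v) * a (\<pi> v) i)"
    by (simp only: a_Suc)
  also have "\<dots> = lam (v, \<pi> v) * outcome w lam \<pi> (\<pi> v)"
    unfolding outcome_def a_def using summable_outcome[OF assms] by (rule suminf_mult)
  finally show ?thesis by (simp add: a_def play_Suc_right)
qed

lemma discounted_max_principle:
  assumes "joint_strategy E \<pi>" and "\<And>u. \<delta> u \<le> lam (u, \<pi> u) * \<delta> (\<pi> u)"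
  shows "\<delta> v \<le> 0"
proof -
  have "Max (range \<delta>) \<in> range \<delta>" by simp
  then obtain m where m: "\<delta> m = Max (range \<delta>)" by (metis rangeE)
  have max: "\<delta> u \<le> \<delta> m" for u by (simp add: m)
  have e: "(m, \<pi> m) \<in> E" using assms(1) by (simp add: joint_strategy_def)
  have "\<delta> m \<le> lam (m, \<pi> m) * \<delta> m"
    using assms(2)[of m] mult_left_mono[OF max[of "\<pi> m"] lam_nonneg[OF e]] by linarith
  then have "(1 - lam (m, \<pi> m)) * \<delta> m \<le> 0" by (simp add: algebra_simps)
  with lam_less_1[OF e] have "\<delta> m \<le> 0" by (simp add: mult_le_0_iff)
  with max show ?thesis by (rule order_trans)
qed

lemma le_outcome:
  assumes \<pi>: "joint_strategy E \<pi>" and "\<And>u. \<nu> u \<le> w (u, \<pi> u) + lam (u, \<pi> u) * \<nu> (\<pi> u)"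
  shows "\<nu> v \<le> outcome w lam \<pi> v"
proof -
  have "\<nu> v - outcome w lam \<pi> v \<le> 0"
  proof (rule discounted_max_principle[OF \<pi>])
    fix u
    show "\<nu> u - outcome w lam \<pi> u \<le> lam (u, \<pi> u) * (\<nu> (\<pi> u) - outcome w lam \<pi> (\<pi> u))"
      using assms(2)[of u] outcome_unfold[OF \<pi>, of u] by (simp add: right_diff_distrib)
  qed
  then show ?thesis by simp
qed

lemma outcome_le:
  assumes \<pi>: "joint_strategy E \<pi>" and "\<And>u. w (u, \<pi> u) + lam (u, \<pi> u) * \<nu> (\<pi> u) \<le> \<nu> u"
  shows "outcome w lam \<pi> v \<le> \<nu> v"
proof -
  have "outcome w lam \<pi> v - \<nu> v \<le> 0"
  proof (rule discounted_max_principle[OF \<pi>])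
    fix u
    show "outcome w lam \<pi> u - \<nu> u \<le> lam (u, \<pi> u) * (outcome w lam \<pi> (\<pi> u) - \<nu> (\<pi> u))"
      using assms(2)[of u] outcome_unfold[OF \<pi>, of u] by (simp add: right_diff_distrib)
  qed
  then show ?thesis by simp
qed

section \<open>The value as the fixed point of the Bellman operator\<close>

lemma solves_H_Vmax:
  "solves_H Vmax E w lam x \<Longrightarrow> (u, u') \<in> E \<Longrightarrow> u \<in> Vmax \<Longrightarrow> w (u, u') + lam (u, u') * x u' \<le> x u"
  unfolding solves_H_def by fastforce

lemma solves_H_Vmin:
  "solves_H Vmax E w lam x \<Longrightarrow> (u, u') \<in> E \<Longrightarrow> u \<notin> Vmax \<Longrightarrow> x u \<le> w (u, u') + lam (u, u') * x u'"
  unfolding solves_H_def by fastforce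

lemma game_val_eq_tight_solution:
  assumes H: "solves_H Vmax E w lam \<nu>" and \<tau>: "joint_strategy E \<tau>"
    and tight: "\<And>u. \<nu> u = w (u, \<tau> u) + lam (u, \<tau> u) * \<nu> (\<tau> u)"
  shows "game_val Vmax E w lam = \<nu>"
proof
  fix v
  have upper: "outcome w lam (combine Vmax \<sigma> \<tau>) v \<le> \<nu> v" if \<sigma>: "joint_strategy E \<sigma>" for \<sigma>
  proof (rule outcome_le[OF joint_strategy_combine[OF \<sigma> \<tau>]])
    fix u
    have e: "(u, \<sigma> u) \<in> E" using \<sigma> by (simp add: joint_strategy_def)
    show "w (u, combine Vmax \<sigma> \<tau> u) + lam (u, combine Vmax \<sigma> \<tau> u) * \<nu> (combine Vmax \<sigma> \<tau> u) \<le> \<nu> u"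
    proof (cases "u \<in> Vmax")
      case True
      then show ?thesis using solves_H_Vmax[OF H e True] by (simp add: combine_def)
    next
      case False
      then show ?thesis using tight[of u] by (simp add: combine_def)
    qed
  qed
  have lower: "\<nu> v \<le> outcome w lam (combine Vmax \<tau> \<sigma>) v" if \<sigma>: "joint_strategy E \<sigma>" for \<sigma>
  proof (rule le_outcome[OF joint_strategy_combine[OF \<tau> \<sigma>]])
    fix u
    have e: "(u, \<sigma> u) \<in> E" using \<sigma> by (simp add: joint_strategy_def)
    show "\<nu> u \<le> w (u, combine Vmax \<tau> \<sigma> u) + lam (u, combine Vmax \<tau> \<sigma> u) * \<nu> (combine Vmax \<tau> \<sigma> u)"
    proof (cases "u \<in> Vmax")
      case True
      then show ?thesis using tight[of u] by (simp add: combine_def)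
    next
      case False
      then show ?thesis using solves_H_Vmin[OF H e False] by (simp add: combine_def)
    qed
  qed
  show "game_val Vmax E w lam v = \<nu> v"
    unfolding game_val_def using \<tau> upper lower by (intro SUP_INF_eq_saddle_value) auto
qed

definition succs :: "'v \<Rightarrow> 'v set" where
  "succs v = {v'. (v, v') \<in> E}"

definition bellman :: "('v \<Rightarrow> real) \<Rightarrow> 'v \<Rightarrow> real" where
  "bellman x v = (if v \<in> Vmax then Max ((\<lambda>v'. w (v, v') + lam (v, v') * x v') ` succs v)
                  else Min ((\<lambda>v'. w (v, v') + lam (v, v') * x v') ` succs v))"

lemma succs_nonempty: "succs v \<noteq> {}"
  using dpg by (auto simp: is_dpg_def succs_def)

lemma bellman_contraction:
  assumes "\<And>u. \<bar>x u - y u\<bar> \<le> M"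
  shows "\<bar>bellman x v - bellman y v\<bar> \<le> lam_max * M"
proof -
  let ?q = "\<lambda>x v'. w (v, v') + lam (v, v') * x v'"
  have diff: "\<bar>?q x v' - ?q y v'\<bar> \<le> lam_max * M" if "v' \<in> succs v" for v'
  proof -
    have e: "(v, v') \<in> E" using that by (simp add: succs_def)
    have "\<bar>?q x v' - ?q y v'\<bar> = lam (v, v') * \<bar>x v' - y v'\<bar>"
      using lam_nonneg[OF e] by (simp add: abs_mult flip: right_diff_distrib)
    also have "\<dots> \<le> lam_max * M"
      using assms[of v'] lam_le_lam_max[OF e] lam_max_nonneg by (intro mult_mono) auto
    finally show ?thesis .
  qed
  have "\<bar>Max (?q x ` succs v) - Max (?q y ` succs v)\<bar> \<le> lam_max * M"
    by (rule Max_image_diff_le[OF _ succs_nonempty diff]) simp_all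
  moreover have "\<bar>Min (?q x ` succs v) - Min (?q y ` succs v)\<bar> \<le> lam_max * M"
    by (rule Min_image_diff_le[OF _ succs_nonempty diff]) simp_all
  ultimately show ?thesis
    by (simp add: bellman_def)
qed

lemma ex_tight_solution:
  "\<exists>y \<tau>. solves_H Vmax E w lam y \<and> joint_strategy E \<tau> \<and>
     (\<forall>u. y u = w (u, \<tau> u) + lam (u, \<tau> u) * y (\<tau> u))"
proof -
  obtain y where fixpoint: "bellman y = y"
    using sup_contraction_fixpoint[of lam_max bellman] lam_max_less_1 bellman_contraction by blast
  define q where "q u = (\<lambda>v'. w (u, v') + lam (u, v') * y v') ` succs u" for u
  have fin: "finite (q u)" and ne: "q u \<noteq> {}" for u
    using succs_nonempty by (simp_all add: q_def)
  have y: "y u = (if u \<in> Vmax then Max (q u) else Min (q u))" for u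
    using fun_cong[OF fixpoint, of u] unfolding bellman_def q_def by simp
  have "solves_H Vmax E w lam y"
    unfolding solves_H_def
  proof clarify
    fix u v' assume "(u, v') \<in> E"
    then have "w (u, v') + lam (u, v') * y v' \<in> q u"
      by (simp add: q_def succs_def)
    then show "if u \<in> Vmax then w (u, v') + lam (u, v') * y v' \<le> y u
               else y u \<le> w (u, v') + lam (u, v') * y v'"
      using y[of u] fin by (auto intro: Max_ge Min_le)
  qed
  moreover have "\<exists>v'. (u, v') \<in> E \<and> y u = w (u, v') + lam (u, v') * y v'" for u
  proof -
    have "y u \<in> q u"
      using y[of u] Max_in[OF fin ne] Min_in[OF fin ne] by simp
    then show ?thesis by (auto simp: q_def succs_def)
  qed
  then obtain \<tau> where "\<forall>u. (u, \<tau> u) \<in> E \<and> y u = w (u, \<tau> u) + lam (u, \<tau> u) * y (\<tau> u)"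
    by metis
  ultimately show ?thesis
    unfolding joint_strategy_def by blast
qed

section \<open>Basis valuations minimising f_sigma\<close>

lemma solves_H_iff_offset_nonneg:
  "solves_H Vmax E w lam x \<longleftrightarrow> (\<forall>e\<in>E. 0 \<le> offset Vmax w lam x e)"
  unfolding solves_H_def offset_def by (auto split: if_splits)

lemma f_strat_nonneg:
  assumes "joint_strategy E \<sigma>" and "solves_H Vmax E w lam x"
  shows "0 \<le> f_strat Vmax w lam \<sigma> x"
  using assms unfolding f_strat_def solves_H_iff_offset_nonneg joint_strategy_def
  by (intro sum_nonneg) auto

lemma f_strat_eq_0_iff:
  assumes "joint_strategy E \<sigma>" and "solves_H Vmax E w lam x"
  shows "f_strat Vmax w lam \<sigma> x = 0 \<longleftrightarrow> (\<forall>u. x u = w (u, \<sigma> u) + lam (u, \<sigma> u) * x (\<sigma> u))"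
proof -
  have offset_0: "offset Vmax w lam x (u, \<sigma> u) = 0 \<longleftrightarrow> x u = w (u, \<sigma> u) + lam (u, \<sigma> u) * x (\<sigma> u)" for u
    by (auto simp: offset_def)
  have "f_strat Vmax w lam \<sigma> x = 0 \<longleftrightarrow> (\<forall>u. offset Vmax w lam x (u, \<sigma> u) = 0)"
    using assms unfolding f_strat_def solves_H_iff_offset_nonneg joint_strategy_def
    by (simp add: sum_nonneg_eq_0_iff)
  then show ?thesis by (simp add: offset_0)
qed

lemma fmin_eqI:
  assumes "solves_H Vmax E w lam \<nu>"
    and "\<And>x. solves_H Vmax E w lam x \<Longrightarrow> f_strat Vmax w lam \<sigma> \<nu> \<le> f_strat Vmax w lam \<sigma> x"
  shows "fmin Vmax E w lam \<sigma> = f_strat Vmax w lam \<sigma> \<nu>"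
  unfolding fmin_def using assms by (intro cInf_eq_minimum) auto

lemma optimal_for_solves_H: "optimal_for Vmax E w lam \<sigma> \<nu> \<Longrightarrow> solves_H Vmax E w lam \<nu>"
  by (simp add: optimal_for_def basis_valuation_def)

lemma fmin_optimal: "optimal_for Vmax E w lam \<sigma> \<nu> \<Longrightarrow> fmin Vmax E w lam \<sigma> = f_strat Vmax w lam \<sigma> \<nu>"
  by (intro fmin_eqI optimal_for_solves_H) (auto simp: optimal_for_def)

text \<open>offset and f_strat are affine in the valuation; with zero weights they give the linear parts.\<close>

abbreviation slope :: "('v \<Rightarrow> real) \<Rightarrow> 'v \<times> 'v \<Rightarrow> real" where
  "slope d \<equiv> offset Vmax (\<lambda>_. 0) lam d"

abbreviation f_slope :: "('v \<Rightarrow> 'v) \<Rightarrow> ('v \<Rightarrow> real) \<Rightarrow> real" where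
  "f_slope \<sigma> d \<equiv> f_strat Vmax (\<lambda>_. 0) lam \<sigma> d"

lemma offset_shift:
  "offset Vmax w lam (\<lambda>u. x u + t * d u) e = offset Vmax w lam x e + t * slope d e"
  unfolding offset_def by (simp add: algebra_simps)

lemma f_strat_shift:
  "f_strat Vmax w lam \<sigma> (\<lambda>u. x u + t * d u) = f_strat Vmax w lam \<sigma> x + t * f_slope \<sigma> d"
  unfolding f_strat_def offset_shift by (simp add: sum.distrib sum_distrib_left)

lemma slope_uminus: "slope (- d) e = - slope d e"
  unfolding offset_def by simp

lemma f_slope_uminus: "f_slope \<sigma> (- d) = - f_slope \<sigma> d"
  unfolding f_strat_def slope_uminus by (simp add: sum_negf)

text \<open>The polyhedron of solutions of H contains no line.\<close>

lemma ex_slope_nonzero: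
  assumes "d \<noteq> (\<lambda>_. 0)"
  shows "\<exists>e\<in>E. slope d e \<noteq> 0"
proof (rule ccontr)
  assume "\<not> ?thesis"
  then have zero: "\<forall>e\<in>E. slope d e = 0" by blast
  obtain \<sigma> where \<sigma>: "joint_strategy E \<sigma>" using ex_joint_strategy by blast
  have flat: "d u = lam (u, \<sigma> u) * d (\<sigma> u)" for u
  proof -
    have "slope d (u, \<sigma> u) = 0"
      using zero \<sigma> by (simp add: joint_strategy_def)
    then show ?thesis by (simp add: offset_def split: if_splits)
  qed
  have "d u \<le> 0" for u
    by (rule discounted_max_principle[OF \<sigma>]) (simp add: flat[symmetric])
  moreover have "(- d) u \<le> 0" for u
    by (rule discounted_max_principle[OF \<sigma>]) (simp add: flat[symmetric])
  ultimately have "d = (\<lambda>_. 0)"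
    by (intro ext antisym) (auto simp: neg_le_0_iff_le)
  with assms show False ..
qed

text \<open>Otherwise f_sigma would be unbounded below along the ray from x in direction d.\<close>

lemma ex_slope_neg:
  assumes \<sigma>: "joint_strategy E \<sigma>" and H: "solves_H Vmax E w lam x" and neg: "f_slope \<sigma> d < 0"
  shows "\<exists>e\<in>E. slope d e < 0"
proof (rule ccontr)
  assume "\<not> ?thesis"
  then have up: "\<forall>e\<in>E. 0 \<le> slope d e" by force
  define t where "t = (f_strat Vmax w lam \<sigma> x + 1) / - f_slope \<sigma> d"
  have "0 \<le> t"
    unfolding t_def using f_strat_nonneg[OF \<sigma> H] neg by (intro divide_nonneg_pos) auto
  with H up have "solves_H Vmax E w lam (\<lambda>u. x u + t * d u)"
    unfolding solves_H_iff_offset_nonneg offset_shift by simp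
  then have "0 \<le> f_strat Vmax w lam \<sigma> x + t * f_slope \<sigma> d"
    using f_strat_nonneg[OF \<sigma>] f_strat_shift by metis
  moreover have "t * f_slope \<sigma> d = - (f_strat Vmax w lam \<sigma> x + 1)"
    unfolding t_def using neg by (simp add: field_simps)
  ultimately show False by simp
qed

lemma ex_improving_direction:
  assumes \<sigma>: "joint_strategy E \<sigma>" and H: "solves_H Vmax E w lam x"
    and "d \<noteq> (\<lambda>_. 0)" and "f_slope \<sigma> d \<le> 0"
  shows "\<exists>d'\<in>{d, - d}. f_slope \<sigma> d' \<le> 0 \<and> (\<exists>e\<in>E. slope d' e < 0)"
proof (cases "f_slope \<sigma> d < 0")
  case True
  then have "\<exists>e\<in>E. slope d e < 0" by (rule ex_slope_neg[OF \<sigma> H])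
  with True show ?thesis by simp
next
  case False
  with assms(4) have "f_slope \<sigma> d = 0" by simp
  obtain e where "e \<in> E" "slope d e \<noteq> 0"
    using ex_slope_nonzero[OF assms(3)] by blast
  show ?thesis
  proof (cases "slope d e < 0")
    case True
    with \<open>e \<in> E\<close> \<open>f_slope \<sigma> d = 0\<close> show ?thesis by auto
  next
    case False
    with \<open>slope d e \<noteq> 0\<close> have "slope (- d) e < 0"
      by (simp add: slope_uminus)
    moreover have "f_slope \<sigma> (- d) \<le> 0"
      using \<open>f_slope \<sigma> d = 0\<close> by (simp add: f_slope_uminus)
    ultimately show ?thesis using \<open>e \<in> E\<close> by auto
  qed
qed

definition tight :: "('v \<Rightarrow> real) \<Rightarrow> ('v \<times> 'v) set" where
  "tight x = {e \<in> E. offset Vmax w lam x e = 0}"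

definition edge_row :: "'v \<times> 'v \<Rightarrow> real^'v" where
  "edge_row e = axis (fst e) 1 - lam e *\<^sub>R axis (snd e) 1"

definition tight_rows :: "('v \<Rightarrow> real) \<Rightarrow> (real^'v) set" where
  "tight_rows x = edge_row ` tight x"

lemma edge_row_inner: "edge_row e \<bullet> z = z $ fst e - lam e * z $ snd e"
  unfolding edge_row_def by (simp add: inner_diff_left inner_axis')

lemma slope_eq_0_iff_orthogonal: "slope (($) z) e = 0 \<longleftrightarrow> orthogonal z (edge_row e)"
  unfolding orthogonal_def inner_commute[of z] offset_def edge_row_inner by auto

lemma tight_iff: "e \<in> tight x \<longleftrightarrow> e \<in> E \<and> x (fst e) = w e + lam e * x (snd e)"
  unfolding tight_def offset_def by auto

lemma eq_if_edge_rows_span: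
  assumes span: "span (edge_row ` B) = UNIV"
    and x: "\<forall>(v, v')\<in>B. x v = w (v, v') + lam (v, v') * x v'"
    and y: "\<forall>(v, v')\<in>B. y v = w (v, v') + lam (v, v') * y v'"
  shows "y = x"
proof -
  define z where "z = (\<chi> u. y u - x u)"
  have "orthogonal z r" if "r \<in> edge_row ` B" for r
  proof -
    obtain v v' where "(v, v') \<in> B" and r: "r = edge_row (v, v')"
      using \<open>r \<in> edge_row ` B\<close> by auto
    then have "x v = w (v, v') + lam (v, v') * x v'" "y v = w (v, v') + lam (v, v') * y v'"
      using x y by auto
    then have "edge_row (v, v') \<bullet> z = 0"
      by (simp add: z_def edge_row_inner algebra_simps)
    then show ?thesis
      by (simp add: orthogonal_def inner_commute r)
  qed
  then have "orthogonal z z"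
    using orthogonal_to_span[of z "edge_row ` B" z] span by blast
  then have "z = 0" by (simp add: orthogonal_def)
  then show "y = x"
    by (simp add: z_def vec_eq_iff fun_eq_iff)
qed

lemma basis_valuation_if_tight_rows_span:
  assumes H: "solves_H Vmax E w lam x" and span: "span (tight_rows x) = UNIV"
  shows "basis_valuation Vmax E w lam x"
proof -
  obtain R where R: "R \<subseteq> tight_rows x" "tight_rows x \<subseteq> span R" "card R = dim (tight_rows x)"
    by (rule basis_exists)
  have "\<forall>r\<in>R. \<exists>e. e \<in> tight x \<and> edge_row e = r"
    using R(1) unfolding tight_rows_def by blast
  then obtain edge where edge: "\<And>r. r \<in> R \<Longrightarrow> edge r \<in> tight x \<and> edge_row (edge r) = r"
    by metis
  define B where "B = edge ` R"
  have "inj_on edge R"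
    using edge by (metis inj_onI)
  then have "card B = card (UNIV :: 'v set)"
    using R(3) span dim_eq_full[of "tight_rows x"] by (simp add: B_def card_image)
  moreover have "B \<subseteq> tight x"
    using edge by (auto simp: B_def)
  then have "B \<subseteq> E" and x: "\<forall>(v, v')\<in>B. x v = w (v, v') + lam (v, v') * x v'"
    by (auto simp: tight_iff)
  moreover have "edge_row ` B = R"
    using edge by (force simp: B_def)
  then have "span (edge_row ` B) = UNIV"
    using R(2) span by (metis span_mono span_span top.extremum_uniqueI)
  then have "\<forall>(v, v')\<in>B. y v = w (v, v') + lam (v, v') * y v' \<Longrightarrow> y = x" for y
    using eq_if_edge_rows_span x by blast
  ultimately have "is_basis E w lam B"
    unfolding is_basis_def by blast
  with x H show ?thesis
    unfolding basis_valuation_def by blast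
qed

text \<open>The ratio test of the simplex method: move from x along d until the first edge of negative
  slope becomes tight.\<close>

lemma ratio_test_step:
  assumes H: "solves_H Vmax E w lam x" and flat: "\<forall>e\<in>tight x. slope d e = 0"
    and "e0 \<in> E" "slope d e0 < 0" and descent: "f_slope \<sigma> d \<le> 0"
  shows "\<exists>x' e'. solves_H Vmax E w lam x' \<and> f_strat Vmax w lam \<sigma> x' \<le> f_strat Vmax w lam \<sigma> x
     \<and> tight x \<subseteq> tight x' \<and> e' \<in> tight x' \<and> slope d e' < 0"
proof -
  define D where "D = {e \<in> E. slope d e < 0}"
  define ratio where "ratio e = offset Vmax w lam x e / - slope d e" for e
  have "finite D" by simp
  moreover have "D \<noteq> {}"
    using assms(3,4) unfolding D_def by blast
  ultimately obtain e' where e': "e' \<in> D" and min: "\<And>e. e \<in> D \<Longrightarrow> ratio e' \<le> ratio e"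
    using arg_min_if_finite[of D ratio] by (metis not_le)
  define t where "t = ratio e'"
  define x' where "x' u = x u + t * d u" for u
  have off: "offset Vmax w lam x' e = offset Vmax w lam x e + t * slope d e" for e
    unfolding x'_def offset_shift ..
  have nonneg: "\<forall>e\<in>E. 0 \<le> offset Vmax w lam x e"
    using H by (simp add: solves_H_iff_offset_nonneg)
  have "0 \<le> t"
    using e' nonneg unfolding t_def ratio_def D_def by (intro divide_nonneg_pos) auto
  have "0 \<le> offset Vmax w lam x' e" if "e \<in> E" for e
  proof (cases "slope d e < 0")
    case True
    then have "t \<le> offset Vmax w lam x e / - slope d e"
      using min[of e] \<open>e \<in> E\<close> unfolding t_def ratio_def D_def by blast
    moreover have "0 < - slope d e" using True by simp
    ultimately have "t * - slope d e \<le> offset Vmax w lam x e"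
      using pos_le_divide_eq by blast
    then show ?thesis
      by (simp add: off)
  next
    case False
    with \<open>0 \<le> t\<close> nonneg \<open>e \<in> E\<close> show ?thesis
      by (simp add: off)
  qed
  then have "solves_H Vmax E w lam x'"
    by (simp add: solves_H_iff_offset_nonneg)
  moreover have "f_strat Vmax w lam \<sigma> x' \<le> f_strat Vmax w lam \<sigma> x"
    unfolding x'_def f_strat_shift using \<open>0 \<le> t\<close> descent by (simp add: mult_nonneg_nonpos)
  moreover have "tight x \<subseteq> tight x'"
    using flat by (auto simp: tight_def off)
  moreover have "e' \<in> tight x'"
    using e' by (simp add: tight_def off t_def ratio_def D_def)
  ultimately show ?thesis
    using e' D_def by blast
qed

lemma ex_improving_direction_orthogonal:
  assumes \<sigma>: "joint_strategy E \<sigma>" and H: "solves_H Vmax E w lam x"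
    and "span (tight_rows x) \<noteq> UNIV"
  shows "\<exists>z. (\<forall>r\<in>span (tight_rows x). orthogonal z r) \<and>
    f_slope \<sigma> (($) z) \<le> 0 \<and> (\<exists>e\<in>E. slope (($) z) e < 0)"
proof -
  have "dim (tight_rows x) < DIM(real^'v)"
    using assms(3) dim_eq_full[of "tight_rows x"] dim_subset_UNIV[of "tight_rows x"] by linarith
  then obtain z0 :: "real^'v" where "z0 \<noteq> 0" and z0: "\<And>r. r \<in> span (tight_rows x) \<Longrightarrow> orthogonal z0 r"
    by (rule orthogonal_to_subspace_exists) blast
  have neg: "($) (- z) = - ($) z" for z :: "real^'v"
    by (simp add: fun_eq_iff)
  define z where "z = (if f_slope \<sigma> (($) z0) \<le> 0 then z0 else - z0)"
  have "($) z \<noteq> (\<lambda>_. 0)"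
    using \<open>z0 \<noteq> 0\<close> by (auto simp: z_def vec_eq_iff fun_eq_iff)
  moreover have "f_slope \<sigma> (($) z) \<le> 0"
    by (simp add: z_def neg f_slope_uminus)
  ultimately obtain z' where "z' \<in> {z, - z}" "f_slope \<sigma> (($) z') \<le> 0" "\<exists>e\<in>E. slope (($) z') e < 0"
    using ex_improving_direction[OF \<sigma> H] by (metis insert_iff neg singletonD)
  moreover have "orthogonal z' r" if "r \<in> span (tight_rows x)" for r
    using z0[OF that] \<open>z' \<in> {z, - z}\<close> by (auto simp: z_def orthogonal_clauses)
  ultimately show ?thesis by blast
qed

lemma tight_rank_increase:
  assumes \<sigma>: "joint_strategy E \<sigma>" and H: "solves_H Vmax E w lam x"
    and "span (tight_rows x) \<noteq> UNIV"
  shows "\<exists>x'. solves_H Vmax E w lam x' \<and> f_strat Vmax w lam \<sigma> x' \<le> f_strat Vmax w lam \<sigma> x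
    \<and> dim (tight_rows x) < dim (tight_rows x')"
proof -
  obtain z where orth: "\<And>r. r \<in> span (tight_rows x) \<Longrightarrow> orthogonal z r"
    and z: "f_slope \<sigma> (($) z) \<le> 0" "\<exists>e\<in>E. slope (($) z) e < 0"
    using ex_improving_direction_orthogonal[OF assms] by blast
  have "\<forall>e\<in>tight x. slope (($) z) e = 0"
  proof
    fix e assume "e \<in> tight x"
    then have "edge_row e \<in> span (tight_rows x)"
      by (simp add: tight_rows_def span_base)
    then show "slope (($) z) e = 0"
      by (simp add: slope_eq_0_iff_orthogonal orth)
  qed
  then obtain x' e' where x': "solves_H Vmax E w lam x'" "f_strat Vmax w lam \<sigma> x' \<le> f_strat Vmax w lam \<sigma> x"
      "tight x \<subseteq> tight x'" "e' \<in> tight x'" "slope (($) z) e' < 0"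
    using ratio_test_step[OF H] z by blast
  have "\<not> orthogonal z (edge_row e')"
    using x'(5) by (simp flip: slope_eq_0_iff_orthogonal)
  then have "edge_row e' \<notin> span (tight_rows x)"
    using orth by blast
  then have "dim (tight_rows x) < dim (insert (edge_row e') (tight_rows x))"
    by (simp add: dim_insert)
  also have "\<dots> \<le> dim (tight_rows x')"
    using x'(3,4) by (intro dim_subset) (auto simp: tight_rows_def)
  finally show ?thesis
    using x'(1,2) by blast
qed

lemma ex_basis_valuation_le:
  assumes \<sigma>: "joint_strategy E \<sigma>" and "solves_H Vmax E w lam x"
  shows "\<exists>y. basis_valuation Vmax E w lam y \<and> f_strat Vmax w lam \<sigma> y \<le> f_strat Vmax w lam \<sigma> x"
  using assms(2)
proof (induction "CARD('v) - dim (tight_rows x)" arbitrary: x rule: less_induct)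
  case (less x)
  show ?case
  proof (cases "span (tight_rows x) = UNIV")
    case True
    then show ?thesis
      using basis_valuation_if_tight_rows_span[OF less.prems] by blast
  next
    case False
    then obtain x' where x': "solves_H Vmax E w lam x'" "f_strat Vmax w lam \<sigma> x' \<le> f_strat Vmax w lam \<sigma> x"
      "dim (tight_rows x) < dim (tight_rows x')"
      using tight_rank_increase[OF \<sigma> less.prems] by blast
    moreover have "dim (tight_rows x') \<le> CARD('v)"
      using dim_subset_UNIV[of "tight_rows x'"] by simp
    ultimately show ?thesis
      using less.hyps[of x'] by (meson diff_less_mono2 order_trans order.strict_trans2)
  qed
qed

lemma finite_basis_valuations: "finite {\<nu>. basis_valuation Vmax E w lam \<nu>}"
proof -
  define solution where
    "solution B = (THE x. \<forall>(v, v')\<in>B. x v = w (v, v') + lam (v, v') * x v')" for B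
  have "{\<nu>. basis_valuation Vmax E w lam \<nu>} \<subseteq> solution ` Pow E"
  proof
    fix \<nu> assume "\<nu> \<in> {\<nu>. basis_valuation Vmax E w lam \<nu>}"
    then obtain B where B: "is_basis E w lam B" "\<forall>(v, v')\<in>B. \<nu> v = w (v, v') + lam (v, v') * \<nu> v'"
      unfolding basis_valuation_def by blast
    then have "solution B = \<nu>"
      unfolding solution_def is_basis_def by (blast intro: the1_equality)
    with B(1) show "\<nu> \<in> solution ` Pow E"
      unfolding is_basis_def by blast
  qed
  then show ?thesis
    by (rule finite_subset) simp
qed

lemma ex_optimal:
  assumes \<sigma>: "joint_strategy E \<sigma>"
  shows "\<exists>\<nu>. optimal_for Vmax E w lam \<sigma> \<nu>"
proof -
  let ?C = "{\<nu>. basis_valuation Vmax E w lam \<nu>}"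
  obtain y where "solves_H Vmax E w lam y"
    using ex_tight_solution by blast
  then have "?C \<noteq> {}"
    using ex_basis_valuation_le[OF \<sigma>] by blast
  then obtain \<nu> where \<nu>: "\<nu> \<in> ?C" and min: "\<And>y. y \<in> ?C \<Longrightarrow> f_strat Vmax w lam \<sigma> \<nu> \<le> f_strat Vmax w lam \<sigma> y"
    using arg_min_if_finite[OF finite_basis_valuations, of "f_strat Vmax w lam \<sigma>"] by (metis not_le)
  have "f_strat Vmax w lam \<sigma> \<nu> \<le> f_strat Vmax w lam \<sigma> x" if "solves_H Vmax E w lam x" for x
    using ex_basis_valuation_le[OF \<sigma> that] min by (blast intro: order_trans)
  with \<nu> show ?thesis
    unfolding optimal_for_def by blast
qed

lemma ex_better_strategy:
  assumes "0 < fmin Vmax E w lam \<sigma>"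
  shows "\<exists>\<sigma>'. joint_strategy E \<sigma>' \<and> better Vmax E w lam \<sigma>' \<sigma>"
proof -
  obtain y \<tau> where y: "solves_H Vmax E w lam y" and \<tau>: "joint_strategy E \<tau>"
    and "\<forall>u. y u = w (u, \<tau> u) + lam (u, \<tau> u) * y (\<tau> u)"
    using ex_tight_solution by blast
  then have "f_strat Vmax w lam \<tau> y = 0"
    using f_strat_eq_0_iff[OF \<tau> y] by blast
  then have "fmin Vmax E w lam \<tau> = 0"
    using fmin_eqI[OF y, of \<tau>] f_strat_nonneg[OF \<tau>] by simp
  with \<tau> assms show ?thesis
    by (auto simp: better_def)
qed

lemma game_val_eq_if_f_strat_eq_0:
  assumes \<sigma>: "joint_strategy E \<sigma>" and H: "solves_H Vmax E w lam \<nu>"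
    and "f_strat Vmax w lam \<sigma> \<nu> = 0"
  shows "\<nu> = game_val Vmax E w lam"
proof -
  have "\<forall>u. \<nu> u = w (u, \<sigma> u) + lam (u, \<sigma> u) * \<nu> (\<sigma> u)"
    using assms(3) f_strat_eq_0_iff[OF \<sigma> H] by blast
  then show ?thesis
    using game_val_eq_tight_solution[OF H \<sigma>] by metis
qed

end

theorem corollary3p4:
  fixes Vmin Vmax :: "'v::finite set" and E :: "('v \<times> 'v) set"
    and w lam :: "'v \<times> 'v \<Rightarrow> real"
  assumes "is_dpg Vmin Vmax E w lam"
  shows
    \<comment> \<open>every step can be carried out: an optimal solution exists\<close>
    "(\<forall>\<sigma>. joint_strategy E \<sigma> \<longrightarrow> (\<exists>\<nu>. optimal_for Vmax E w lam \<sigma> \<nu>))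
     \<comment> \<open>if not returning, a better joint strategy exists\<close>
   \<and> (\<forall>\<sigma> \<nu>. joint_strategy E \<sigma> \<and> optimal_for Vmax E w lam \<sigma> \<nu> \<and> f_strat Vmax w lam \<sigma> \<nu> \<noteq> 0
        \<longrightarrow> (\<exists>\<sigma>'. joint_strategy E \<sigma>' \<and> better Vmax E w lam \<sigma>' \<sigma>))
     \<comment> \<open>termination: no infinite run, whatever the choices\<close>
   \<and> \<not> (\<exists>\<sigma>s \<nu>s. \<forall>i. joint_strategy E (\<sigma>s i) \<and> optimal_for Vmax E w lam (\<sigma>s i) (\<nu>s i)
        \<and> f_strat Vmax w lam (\<sigma>s i) (\<nu>s i) \<noteq> 0 \<and> better Vmax E w lam (\<sigma>s (Suc i)) (\<sigma>s i))
     \<comment> \<open>correctness of the returned valuation\<close>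
   \<and> (\<forall>\<sigma> \<nu>. joint_strategy E \<sigma> \<and> optimal_for Vmax E w lam \<sigma> \<nu> \<and> f_strat Vmax w lam \<sigma> \<nu> = 0
        \<longrightarrow> \<nu> = game_val Vmax E w lam)"
proof -
  interpret dpg Vmin Vmax E w lam by unfold_locales (rule assms)
  have "0 < fmin Vmax E w lam \<sigma>"
    if "joint_strategy E \<sigma>" "optimal_for Vmax E w lam \<sigma> \<nu>" "f_strat Vmax w lam \<sigma> \<nu> \<noteq> 0" for \<sigma> \<nu>
    using that f_strat_nonneg[OF that(1) optimal_for_solves_H[OF that(2)]] fmin_optimal[OF that(2)]
    by simp
  moreover have "\<not> (\<forall>i. better Vmax E w lam (\<sigma>s (Suc i)) (\<sigma>s i))" for \<sigma>s :: "nat \<Rightarrow> 'v \<Rightarrow> 'v"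
    unfolding better_def by (rule no_infinite_descent_finite[of "fmin Vmax E w lam" \<sigma>s])
  ultimately show ?thesis
    using ex_optimal ex_better_strategy game_val_eq_if_f_strat_eq_0 optimal_for_solves_H by blast
qed

end
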